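(* Let $X=\{x_1,\dots,x_n\}$ be a finite $T_0$-space with matrix $X_M$, having rows $r_1,\dots,r_n$ and columns $c_1,\dots,c_n$. Then $x_i$ is an up beat point if and only if there exists $1\le j\le n$ with $r_i-r_j=-e_i$; and $x_i$ is a down beat point if and only if there exists $1\le j\le n$ with $c_i-c_j=-e_i$.
   Context: A finite $T_0$-space is identified with a finite poset via $x\le y$ iff $U_x\subseteq U_y$, where $U_x$ is the minimal open set containing $x$. For a labelling $X=\{x_1,\dots,x_n\}$, $X_M=(x_{i,j})$ is the $n\times n$ matrix with $x_{i,j}=0$ if $x_i\le x_j$ and $x_{i,j}=1$ otherwise. $e_i$ denotes the vector (row or column, as appropriate) with $1$ in position $i$ and $0$ elsewhere. Let $\hat U_x=\{y\in X: y<x\}$ and $\hat F_x=\{y\in X: y>x\}$. A point $x$ is a down beat point if $\hat U_x$ has a maximum, and an up beat point if $\hat F_x$ has a minimum. *)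

theory Defs
  imports "HOL-Analysis.Analysis"
begin

definition minopen :: "'a topology \<Rightarrow> 'a \<Rightarrow> 'a set" where
  "minopen T x = \<Inter> {U. openin T U \<and> x \<in> U}"

definition fle :: "'a topology \<Rightarrow> 'a \<Rightarrow> 'a \<Rightarrow> bool" where
  "fle T x y \<longleftrightarrow> x \<in> topspace T \<and> y \<in> topspace T \<and> minopen T x \<subseteq> minopen T y"

definition fless :: "'a topology \<Rightarrow> 'a \<Rightarrow> 'a \<Rightarrow> bool" where
  "fless T x y \<longleftrightarrow> fle T x y \<and> x \<noteq> y"

definition hatU :: "'a topology \<Rightarrow> 'a \<Rightarrow> 'a set" where
  "hatU T x = {y \<in> topspace T. fless T y x}"

definition hatF :: "'a topology \<Rightarrow> 'a \<Rightarrow> 'a set" where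
  "hatF T x = {y \<in> topspace T. fless T x y}"

definition down_beat :: "'a topology \<Rightarrow> 'a \<Rightarrow> bool" where
  "down_beat T x \<longleftrightarrow> (\<exists>m \<in> hatU T x. \<forall>y \<in> hatU T x. fle T y m)"

definition up_beat :: "'a topology \<Rightarrow> 'a \<Rightarrow> bool" where
  "up_beat T x \<longleftrightarrow> (\<exists>m \<in> hatF T x. \<forall>y \<in> hatF T x. fle T m y)"

text \<open>The matrix X_M for the labelling xs (indices 1..n): entry 0 if x_i \<le> x_j, else 1.\<close>
definition space_matrix :: "'a topology \<Rightarrow> (nat \<Rightarrow> 'a) \<Rightarrow> nat \<Rightarrow> nat \<Rightarrow> int" where
  "space_matrix T xs i j = (if fle T (xs i) (xs j) then 0 else 1)"

definition unitvec :: "nat \<Rightarrow> nat \<Rightarrow> int" where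
  "unitvec i k = (if k = i then 1 else 0)"

end

theory Submission
  imports Defs
begin

text \<open>
  Over a partial order, \<open>x\<close> is an up beat point exactly when some \<open>y\<close> has the same
  up-set as \<open>x\<close> except for \<open>x\<close> itself: such a \<open>y\<close> lies above \<open>x\<close> and below every other
  element above \<open>x\<close>, i.e. it is the minimum of \<open>hatF x\<close>. Since row \<open>i\<close> of \<open>X\<^sub>M\<close> is the
  0/1 indicator of the complement of the up-set of \<open>x\<^sub>i\<close>, this is the condition
  \<open>r\<^sub>i - r\<^sub>j = -e\<^sub>i\<close>. Down beat points and columns are the order dual.
\<close>

lemma fle_refl: "x \<in> topspace T \<Longrightarrow> fle T x x"
  unfolding fle_def by auto

lemma fle_trans: "fle T x y \<Longrightarrow> fle T y z \<Longrightarrow> fle T x z"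
  unfolding fle_def by auto

lemma fle_antisym:
  assumes "t0_space T" "fle T x y" "fle T y x"
  shows "x = y"
proof (rule ccontr)
  assume "x \<noteq> y"
  moreover have "x \<in> topspace T" "y \<in> topspace T" "minopen T x = minopen T y"
    using assms(2,3) unfolding fle_def by auto
  ultimately obtain U where "openin T U" "x \<in> U \<longleftrightarrow> y \<notin> U"
    using assms(1) unfolding t0_space_def by blast
  then have "minopen T x \<subseteq> U \<or> minopen T y \<subseteq> U" "x \<notin> U \<or> y \<notin> U"
    unfolding minopen_def by blast+
  then show False
    using \<open>minopen T x = minopen T y\<close> unfolding minopen_def by blast
qed

lemma least_strict_upper_bound_iff_same_upset:
  assumes refl: "\<And>x. x \<in> S \<Longrightarrow> le x x"
    and trans: "\<And>x y z. x \<in> S \<Longrightarrow> y \<in> S \<Longrightarrow> z \<in> S \<Longrightarrow> le x y \<Longrightarrow> le y z \<Longrightarrow> le x z"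
    and antisym: "\<And>x y. x \<in> S \<Longrightarrow> y \<in> S \<Longrightarrow> le x y \<Longrightarrow> le y x \<Longrightarrow> x = y"
    and "x \<in> S"
  shows "(\<exists>m\<in>S. le x m \<and> m \<noteq> x \<and> (\<forall>y\<in>S. le x y \<and> y \<noteq> x \<longrightarrow> le m y))
     \<longleftrightarrow> (\<exists>m\<in>S. \<not> le m x \<and> (\<forall>z\<in>S. z \<noteq> x \<longrightarrow> (le x z \<longleftrightarrow> le m z)))"
proof
  assume "\<exists>m\<in>S. le x m \<and> m \<noteq> x \<and> (\<forall>y\<in>S. le x y \<and> y \<noteq> x \<longrightarrow> le m y)"
  then obtain m where m: "m \<in> S" "le x m" "m \<noteq> x" "\<forall>y\<in>S. le x y \<and> y \<noteq> x \<longrightarrow> le m y"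
    by blast
  have "\<not> le m x" using antisym m \<open>x \<in> S\<close> by blast
  moreover have "le x z \<longleftrightarrow> le m z" if "z \<in> S" "z \<noteq> x" for z
    using m trans \<open>x \<in> S\<close> that by blast
  ultimately show "\<exists>m\<in>S. \<not> le m x \<and> (\<forall>z\<in>S. z \<noteq> x \<longrightarrow> (le x z \<longleftrightarrow> le m z))"
    using \<open>m \<in> S\<close> by blast
next
  assume "\<exists>m\<in>S. \<not> le m x \<and> (\<forall>z\<in>S. z \<noteq> x \<longrightarrow> (le x z \<longleftrightarrow> le m z))"
  then obtain m where m: "m \<in> S" "\<not> le m x" "\<forall>z\<in>S. z \<noteq> x \<longrightarrow> (le x z \<longleftrightarrow> le m z)"
    by blast
  have "m \<noteq> x" using m refl \<open>x \<in> S\<close> by blast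
  then have "le x m" using m refl by blast
  then show "\<exists>m\<in>S. le x m \<and> m \<noteq> x \<and> (\<forall>y\<in>S. le x y \<and> y \<noteq> x \<longrightarrow> le m y)"
    using m \<open>m \<noteq> x\<close> by blast
qed

lemma up_beat_iff_same_upset:
  assumes "t0_space T" "x \<in> topspace T"
  shows "up_beat T x \<longleftrightarrow>
    (\<exists>y\<in>topspace T. \<not> fle T y x \<and> (\<forall>z\<in>topspace T. z \<noteq> x \<longrightarrow> (fle T x z \<longleftrightarrow> fle T y z)))"
    (is "_ \<longleftrightarrow> ?same_upset")
proof -
  have "up_beat T x \<longleftrightarrow> (\<exists>m\<in>topspace T. fle T x m \<and> m \<noteq> x \<and>
      (\<forall>y\<in>topspace T. fle T x y \<and> y \<noteq> x \<longrightarrow> fle T m y))"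
    unfolding up_beat_def hatF_def fless_def by auto
  also have "\<dots> \<longleftrightarrow> ?same_upset"
  proof (rule least_strict_upper_bound_iff_same_upset)
    fix a b c
    assume "fle T a b" "fle T b c"
    then show "fle T a c" by (rule fle_trans)
  next
    fix a b
    assume "fle T a b" "fle T b a"
    then show "a = b" by (rule fle_antisym[OF assms(1)])
  qed (simp_all add: fle_refl assms(2))
  finally show ?thesis .
qed

lemma down_beat_iff_same_downset:
  assumes "t0_space T" "x \<in> topspace T"
  shows "down_beat T x \<longleftrightarrow>
    (\<exists>y\<in>topspace T. \<not> fle T x y \<and> (\<forall>z\<in>topspace T. z \<noteq> x \<longrightarrow> (fle T z x \<longleftrightarrow> fle T z y)))"
    (is "_ \<longleftrightarrow> ?same_downset")
proof -
  have "down_beat T x \<longleftrightarrow> (\<exists>m\<in>topspace T. fle T m x \<and> m \<noteq> x \<and>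
      (\<forall>y\<in>topspace T. fle T y x \<and> y \<noteq> x \<longrightarrow> fle T y m))"
    unfolding down_beat_def hatU_def fless_def by auto
  also have "\<dots> \<longleftrightarrow> ?same_downset"
  proof (rule least_strict_upper_bound_iff_same_upset[where le = "\<lambda>a b. fle T b a"])
    fix a b c
    assume "fle T b a" "fle T c b"
    then show "fle T c a" by (rule fle_trans[rotated])
  next
    fix a b
    assume "fle T b a" "fle T a b"
    then show "a = b" by (rule fle_antisym[OF assms(1), rotated])
  qed (simp_all add: fle_refl assms(2))
  finally show ?thesis .
qed

lemma indicator_row_diff_eq_neg_unitvec_iff:
  fixes R :: "nat \<Rightarrow> nat \<Rightarrow> bool"
  assumes "R i i" "i \<in> I"
  shows "(\<forall>k\<in>I. (if R i k then 0 else 1) - (if R j k then 0 else 1) = - unitvec i k)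
     \<longleftrightarrow> \<not> R j i \<and> (\<forall>k\<in>I. k \<noteq> i \<longrightarrow> (R i k \<longleftrightarrow> R j k))"
  using assms by (auto simp: unitvec_def split: if_splits)

lemma bij_betw_reindex_same_set:
  assumes "bij_betw f I S" "i \<in> I"
  shows "(\<exists>y\<in>S. Q y \<and> (\<forall>z\<in>S. z \<noteq> f i \<longrightarrow> P y z))
     \<longleftrightarrow> (\<exists>j\<in>I. Q (f j) \<and> (\<forall>k\<in>I. k \<noteq> i \<longrightarrow> P (f j) (f k)))"
proof -
  have inj: "inj_on f I" and S: "S = f ` I"
    using assms(1) by (auto simp: bij_betw_def)
  have "(\<forall>z\<in>S. z \<noteq> f i \<longrightarrow> P y z) \<longleftrightarrow> (\<forall>k\<in>I. k \<noteq> i \<longrightarrow> P y (f k))" for y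
    using inj assms(2) unfolding S inj_on_def by auto
  then show ?thesis
    unfolding S by auto
qed

theorem mainTheorem2:
  fixes T :: "'a topology" and xs :: "nat \<Rightarrow> 'a" and n :: nat
  assumes "finite (topspace T)"
    and "t0_space T"
    and "bij_betw xs {1..n} (topspace T)"
    and "i \<in> {1..n}"
  shows "(up_beat T (xs i) \<longleftrightarrow>
            (\<exists>j \<in> {1..n}. \<forall>k \<in> {1..n}.
               space_matrix T xs i k - space_matrix T xs j k = - unitvec i k))
       \<and> (down_beat T (xs i) \<longleftrightarrow>
            (\<exists>j \<in> {1..n}. \<forall>k \<in> {1..n}.
               space_matrix T xs k i - space_matrix T xs k j = - unitvec i k))"
proof -
  have xi: "xs i \<in> topspace T"
    using assms(3,4) bij_betwE by blast
  have "up_beat T (xs i) \<longleftrightarrow> (\<exists>j\<in>{1..n}. \<not> fle T (xs j) (xs i) \<and>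
      (\<forall>k\<in>{1..n}. k \<noteq> i \<longrightarrow> (fle T (xs i) (xs k) \<longleftrightarrow> fle T (xs j) (xs k))))"
    using up_beat_iff_same_upset[OF assms(2) xi] bij_betw_reindex_same_set[OF assms(3,4)] by simp
  moreover have "down_beat T (xs i) \<longleftrightarrow> (\<exists>j\<in>{1..n}. \<not> fle T (xs i) (xs j) \<and>
      (\<forall>k\<in>{1..n}. k \<noteq> i \<longrightarrow> (fle T (xs k) (xs i) \<longleftrightarrow> fle T (xs k) (xs j))))"
    using down_beat_iff_same_downset[OF assms(2) xi] bij_betw_reindex_same_set[OF assms(3,4)] by simp
  ultimately show ?thesis
    unfolding space_matrix_def
    using indicator_row_diff_eq_neg_unitvec_iff[of "\<lambda>a b. fle T (xs a) (xs b)" i]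
      indicator_row_diff_eq_neg_unitvec_iff[of "\<lambda>a b. fle T (xs b) (xs a)" i]
      fle_refl[OF xi] assms(4) by simp
qed

end
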